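(* Let $\mathcal{M}=(S,E,T)$ be a trivially parametric Markov chain satisfying the standing assumptions below. Then every never-worse equivalence class that contains neither $\mathit{fin}$ nor $\mathit{fail}$ has exactly one exit.
   Context: A trivially parametric Markov chain $\mathcal{M}=(S,E,T)$ consists of a finite set of states $S$, targets $T=\{\mathit{fin},\mathit{fail}\}$ with no outgoing edges, and edges $E\subseteq(S\setminus T)\times S$. A graph-preserving valuation assigns to each non-target $s$ a full-support probability distribution on its successor set $sE$; $P_{\mathsf{val}}(s)$ is the probability of reaching $\mathit{fin}$ from $s$. $s\sim s'$ iff $P_{\mathsf{val}}(s)=P_{\mathsf{val}}(s')$ for all graph-preserving valuations; equivalence classes are the classes of $\sim$. A state $s$ is an exit of $U\subseteq S$ if $s\in U$ and $sE\not\subseteq U$. Standing assumptions: the equivalence classes of $\mathit{fin}$ and $\mathit{fail}$ are $\{\mathit{fin}\}$ and $\{\mathit{fail}\}$; no state has a self-loop; every non-target state has exactly two successors. *)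

theory Defs
  imports Complex_Main
begin

text \<open>Trivially parametric Markov chain (S, E, T) with targets T = {fin, fail}.\<close>

definition tpmc :: "'a set \<Rightarrow> ('a \<times> 'a) set \<Rightarrow> 'a \<Rightarrow> 'a \<Rightarrow> bool" where
  "tpmc S E fin fail \<longleftrightarrow> finite S \<and> fin \<in> S \<and> fail \<in> S \<and> fin \<noteq> fail \<and>
     E \<subseteq> (S - {fin, fail}) \<times> S"

definition succs :: "('a \<times> 'a) set \<Rightarrow> 'a \<Rightarrow> 'a set" where
  "succs E s = {t. (s, t) \<in> E}"

definition graph_preserving ::
  "'a set \<Rightarrow> ('a \<times> 'a) set \<Rightarrow> 'a \<Rightarrow> 'a \<Rightarrow> ('a \<Rightarrow> 'a \<Rightarrow> real) \<Rightarrow> bool" where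
  "graph_preserving S E fin fail val \<longleftrightarrow>
     (\<forall>s \<in> S - {fin, fail}. (\<forall>t \<in> succs E s. val s t > 0) \<and> (\<Sum>t \<in> succs E s. val s t) = 1)"

fun reach_within ::
  "('a \<times> 'a) set \<Rightarrow> 'a \<Rightarrow> 'a \<Rightarrow> ('a \<Rightarrow> 'a \<Rightarrow> real) \<Rightarrow> nat \<Rightarrow> 'a \<Rightarrow> real" where
  "reach_within E fin fail val 0 s = (if s = fin then 1 else 0)"
| "reach_within E fin fail val (Suc n) s =
     (if s = fin then 1 else if s = fail then 0
      else (\<Sum>t \<in> succs E s. val s t * reach_within E fin fail val n t))"

text \<open>P_val(s): probability of eventually reaching fin (limit of the increasing bounded sequence).\<close>
definition reach_prob ::
  "('a \<times> 'a) set \<Rightarrow> 'a \<Rightarrow> 'a \<Rightarrow> ('a \<Rightarrow> 'a \<Rightarrow> real) \<Rightarrow> 'a \<Rightarrow> real" where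
  "reach_prob E fin fail val s = (SUP n. reach_within E fin fail val n s)"

definition equiv_states ::
  "'a set \<Rightarrow> ('a \<times> 'a) set \<Rightarrow> 'a \<Rightarrow> 'a \<Rightarrow> 'a \<Rightarrow> 'a \<Rightarrow> bool" where
  "equiv_states S E fin fail s s' \<longleftrightarrow>
     (\<forall>val. graph_preserving S E fin fail val \<longrightarrow>
        reach_prob E fin fail val s = reach_prob E fin fail val s')"

definition equiv_class :: "'a set \<Rightarrow> ('a \<times> 'a) set \<Rightarrow> 'a \<Rightarrow> 'a \<Rightarrow> 'a \<Rightarrow> 'a set" where
  "equiv_class S E fin fail s = {s' \<in> S. equiv_states S E fin fail s s'}"

definition is_exit :: "('a \<times> 'a) set \<Rightarrow> 'a set \<Rightarrow> 'a \<Rightarrow> bool" where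
  "is_exit E U s \<longleftrightarrow> s \<in> U \<and> \<not> succs E s \<subseteq> U"

end

theory Submission
  imports Defs
begin

(* Existence: a class without exit is closed under successors, so fin is never reached from it
   and the class would contain fail.

   Uniqueness: every state other than fail reaches fin, since otherwise it would be equivalent to
   fail. If x and y were two exits of one class, then along a path from x to fin one of them, say y,
   reaches fin without visiting the other one. Changing the valuation at x alone then changes no
   reachability probability: the difference of the two probability vectors is harmonic away from x,
   so its maximum is attained at x, hence at the equivalent state y, and hence along the path from y
   to fin, where the difference vanishes. As x has exactly two successors a and b, moving weight
   between them without changing P(x) forces P(a) = P(b) = P(x), so the successor of x outside the
   class would be equivalent to x. *)

lemma rtrancl_last_visit:
  assumes "(u, v) \<in> R\<^sup>*"
  shows "(u, v) \<in> (R - UNIV \<times> {z})\<^sup>* \<or> (z, v) \<in> (R - UNIV \<times> {z})\<^sup>*"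
  using assms
proof (induction rule: converse_rtrancl_induct)
  case base
  then show ?case by simp
next
  case (step u w)
  show ?case
  proof (cases "(w, v) \<in> (R - UNIV \<times> {z})\<^sup>* \<and> w \<noteq> z")
    case True
    with step.hyps(1) show ?thesis by (blast intro: converse_rtrancl_into_rtrancl)
  qed (use step.IH in auto)
qed

lemma weighted_average_eq_max:
  fixes w f :: "'a \<Rightarrow> real"
  assumes "finite A" and "\<forall>v\<in>A. 0 < w v" and "sum w A = 1" and "\<forall>v\<in>A. f v \<le> M"
    and "(\<Sum>v\<in>A. w v * f v) = M" and "u \<in> A"
  shows "f u = M"
proof -
  have "(\<Sum>v\<in>A. w v * (M - f v)) = sum w A * M - (\<Sum>v\<in>A. w v * f v)"
    by (simp add: right_diff_distrib sum_subtractf sum_distrib_right)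
  also have "\<dots> = 0"
    using assms(3,5) by simp
  finally have "\<forall>v\<in>A. w v * (M - f v) = 0"
    using assms(1,2,4) by (subst sum_nonneg_eq_0_iff[symmetric]) (auto simp: less_imp_le)
  then show ?thesis
    using assms(2,6) by force
qed

lemma reach_prob_fin: "reach_prob E fin fail val fin = 1"
proof -
  have "reach_within E fin fail val n fin = 1" for n
    by (cases n) auto
  then show ?thesis
    unfolding reach_prob_def by simp
qed

lemma reach_prob_closed_eq_0:
  assumes closed: "\<forall>u\<in>U. succs E u \<subseteq> U" and "fin \<notin> U" and "s \<in> U"
  shows "reach_prob E fin fail val s = 0"
proof -
  have "\<forall>s\<in>U. reach_within E fin fail val n s = 0" for n
  proof (induction n)
    case 0
    show ?case
      using \<open>fin \<notin> U\<close> by auto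
  next
    case (Suc n)
    show ?case
    proof
      fix s
      assume "s \<in> U"
      with Suc closed have "\<forall>t\<in>succs E s. reach_within E fin fail val n t = 0"
        by blast
      with \<open>s \<in> U\<close> \<open>fin \<notin> U\<close> show "reach_within E fin fail val (Suc n) s = 0"
        by auto
    qed
  qed
  then show ?thesis
    unfolding reach_prob_def using \<open>s \<in> U\<close> by simp
qed

locale tpmc_chain =
  fixes S :: "'a set" and E :: "('a \<times> 'a) set" and fin fail :: 'a
  assumes tpmc: "tpmc S E fin fail"
begin

abbreviation valuation :: "('a \<Rightarrow> 'a \<Rightarrow> real) \<Rightarrow> bool" where
  "valuation val \<equiv> graph_preserving S E fin fail val"

abbreviation prob :: "('a \<Rightarrow> 'a \<Rightarrow> real) \<Rightarrow> 'a \<Rightarrow> real" where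
  "prob val \<equiv> reach_prob E fin fail val"

abbreviation equivalent :: "'a \<Rightarrow> 'a \<Rightarrow> bool" (infix \<open>\<approx>\<close> 50) where
  "s \<approx> t \<equiv> equiv_states S E fin fail s t"

lemma targets_in_S: "fin \<in> S" "fail \<in> S"
  using tpmc unfolding tpmc_def by auto

lemma fin_neq_fail: "fin \<noteq> fail"
  using tpmc unfolding tpmc_def by auto

lemma nontarget_if_succs_nonempty: "succs E s \<noteq> {} \<Longrightarrow> s \<in> S - {fin, fail}"
  using tpmc unfolding tpmc_def succs_def by auto

lemma succs_subset: "succs E s \<subseteq> S"
  using tpmc unfolding tpmc_def succs_def by auto

lemma finite_succs: "finite (succs E s)"
  using tpmc succs_subset unfolding tpmc_def by (blast intro: finite_subset)

lemma valuation_pos: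
  assumes "valuation val" and "t \<in> succs E s"
  shows "0 < val s t"
  using assms nontarget_if_succs_nonempty[of s] unfolding graph_preserving_def by blast

lemma valuation_nonneg: "valuation val \<Longrightarrow> t \<in> succs E s \<Longrightarrow> 0 \<le> val s t"
  using valuation_pos by (simp add: less_imp_le)

lemma valuation_sum:
  assumes "valuation val" and "s \<in> S - {fin, fail}"
  shows "(\<Sum>t\<in>succs E s. val s t) = 1"
  using assms unfolding graph_preserving_def by blast

lemma reach_within_nonneg:
  assumes "valuation val"
  shows "0 \<le> reach_within E fin fail val n s"
  by (induction n arbitrary: s)
    (auto intro!: sum_nonneg mult_nonneg_nonneg valuation_nonneg[OF assms])

lemma reach_within_le_1:
  assumes "valuation val"
  shows "reach_within E fin fail val n s \<le> 1"
proof (induction n arbitrary: s)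
  case (Suc n)
  show ?case
  proof (cases "s \<in> S - {fin, fail}")
    case True
    have "(\<Sum>t\<in>succs E s. val s t * reach_within E fin fail val n t) \<le> (\<Sum>t\<in>succs E s. val s t)"
      by (intro sum_mono mult_left_le Suc.IH valuation_nonneg[OF assms])
    then show ?thesis
      using True valuation_sum[OF assms True] by simp
  next
    case False
    then have "succs E s = {}"
      using nontarget_if_succs_nonempty by blast
    then show ?thesis
      by simp
  qed
qed simp

lemma reach_within_Suc_mono:
  assumes "valuation val"
  shows "reach_within E fin fail val n s \<le> reach_within E fin fail val (Suc n) s"
proof (induction n arbitrary: s)
  case 0
  show ?case
    by (auto intro!: sum_nonneg mult_nonneg_nonneg valuation_nonneg[OF assms])
next
  case (Suc n)
  then show ?case
    by (auto intro!: sum_mono mult_left_mono valuation_nonneg[OF assms])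
qed

lemma reach_within_tendsto:
  assumes "valuation val"
  shows "(\<lambda>n. reach_within E fin fail val n s) \<longlonglongrightarrow> prob val s"
  unfolding reach_prob_def
proof (rule LIMSEQ_incseq_SUP)
  show "bdd_above (range (\<lambda>n. reach_within E fin fail val n s))"
    using reach_within_le_1[OF assms] by (intro bdd_aboveI[where M = 1]) auto
  show "incseq (\<lambda>n. reach_within E fin fail val n s)"
    using reach_within_Suc_mono[OF assms] by (rule incseq_SucI)
qed

lemma prob_harmonic:
  assumes "valuation val" and "s \<noteq> fin" and "s \<noteq> fail"
  shows "prob val s = (\<Sum>t\<in>succs E s. val s t * prob val t)"
proof (rule LIMSEQ_unique)
  show "(\<lambda>n. reach_within E fin fail val (Suc n) s) \<longlonglongrightarrow> prob val s"
    using reach_within_tendsto[OF assms(1)] by (rule LIMSEQ_Suc)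
  show "(\<lambda>n. reach_within E fin fail val (Suc n) s) \<longlonglongrightarrow> (\<Sum>t\<in>succs E s. val s t * prob val t)"
    using assms(2,3) by (simp add: tendsto_sum tendsto_mult_left reach_within_tendsto[OF assms(1)])
qed

lemma prob_fail: "prob val fail = 0"
  by (rule reach_prob_closed_eq_0[of "{fail}"])
    (use nontarget_if_succs_nonempty[of fail] fin_neq_fail in auto)

lemma reaches_fin:
  assumes fail_class: "equiv_class S E fin fail fail = {fail}" and "s \<in> S" and "s \<noteq> fail"
  shows "(s, fin) \<in> E\<^sup>*"
proof (rule ccontr)
  assume unreachable: "(s, fin) \<notin> E\<^sup>*"
  have "prob val s = 0" for val
  proof (rule reach_prob_closed_eq_0[of "E\<^sup>* `` {s}"])
    show "\<forall>u\<in>E\<^sup>* `` {s}. succs E u \<subseteq> E\<^sup>* `` {s}"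
      unfolding succs_def by (auto intro: rtrancl_into_rtrancl)
  qed (use unreachable in auto)
  then have "s \<in> equiv_class S E fin fail fail"
    using \<open>s \<in> S\<close> prob_fail unfolding equiv_class_def equiv_states_def by simp
  with fail_class \<open>s \<noteq> fail\<close> show False
    by blast
qed

lemma class_has_exit:
  assumes "s \<in> S" and "fin \<notin> equiv_class S E fin fail s" and "fail \<notin> equiv_class S E fin fail s"
  shows "\<exists>x. is_exit E (equiv_class S E fin fail s) x"
proof (rule ccontr)
  let ?C = "equiv_class S E fin fail s"
  assume "\<nexists>x. is_exit E ?C x"
  then have closed: "\<forall>u\<in>?C. succs E u \<subseteq> ?C"
    unfolding is_exit_def by blast
  have "s \<in> ?C"
    using \<open>s \<in> S\<close> unfolding equiv_class_def equiv_states_def by simp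
  with closed assms(2) have "prob val s = prob val fail" for val
    by (simp add: reach_prob_closed_eq_0 prob_fail)
  then have "fail \<in> ?C"
    using targets_in_S unfolding equiv_class_def equiv_states_def by simp
  with assms(3) show False ..
qed

lemma prob_diff_harmonic:
  assumes "valuation val" and "valuation val'" and agree: "\<forall>s. s \<noteq> x \<longrightarrow> val' s = val s"
    and "t \<notin> {fin, fail, x}"
  shows "prob val' t - prob val t = (\<Sum>u\<in>succs E t. val t u * (prob val' u - prob val u))"
proof -
  have "prob val' t = (\<Sum>u\<in>succs E t. val t u * prob val' u)"
    using prob_harmonic[OF assms(2), of t] agree assms(4) by simp
  moreover have "prob val t = (\<Sum>u\<in>succs E t. val t u * prob val u)"
    using prob_harmonic[OF assms(1), of t] assms(4) by simp
  ultimately show ?thesis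
    by (simp add: right_diff_distrib sum_subtractf)
qed

lemma prob_diff_max_set_closed:
  assumes val: "valuation val" and val': "valuation val'" and agree: "\<forall>s. s \<noteq> x \<longrightarrow> val' s = val s"
    and le_M: "\<forall>s\<in>S. prob val' s - prob val s \<le> M" and "0 < M"
  defines "T \<equiv> {t \<in> S. prob val' t - prob val t = M}"
  shows "fin \<notin> T" and "fail \<notin> T" and "(E - {x} \<times> UNIV) `` T \<subseteq> T"
proof -
  show "fin \<notin> T" and "fail \<notin> T"
    using \<open>0 < M\<close> unfolding T_def by (simp_all add: reach_prob_fin prob_fail)
  show "(E - {x} \<times> UNIV) `` T \<subseteq> T"
  proof
    fix u
    assume "u \<in> (E - {x} \<times> UNIV) `` T"
    then obtain t where "t \<in> T" and "t \<noteq> x" and "u \<in> succs E t"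
      unfolding succs_def by blast
    with \<open>fin \<notin> T\<close> \<open>fail \<notin> T\<close> have t: "t \<in> S - {fin, fail, x}"
      unfolding T_def by auto
    have "prob val' u - prob val u = M"
    proof (rule weighted_average_eq_max[OF finite_succs])
      show "(\<Sum>v\<in>succs E t. val t v * (prob val' v - prob val v)) = M"
        using prob_diff_harmonic[OF val val' agree, of t] t \<open>t \<in> T\<close> unfolding T_def by simp
      show "\<forall>v\<in>succs E t. prob val' v - prob val v \<le> M"
        using le_M succs_subset by blast
    qed (use valuation_pos[OF val] valuation_sum[OF val] t \<open>u \<in> succs E t\<close> in auto)
    then show "u \<in> T"
      using succs_subset \<open>u \<in> succs E t\<close> unfolding T_def by auto
  qed
qed

lemma perturbation_prob_le:
  assumes reach: "\<forall>s\<in>S - {fail}. (s, fin) \<in> E\<^sup>*"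
    and val: "valuation val" and val': "valuation val'" and agree: "\<forall>s. s \<noteq> x \<longrightarrow> val' s = val s"
    and "y \<in> S" and "y \<noteq> x" and "x \<approx> y" and path: "(y, fin) \<in> (E - UNIV \<times> {x})\<^sup>*"
    and "s \<in> S"
  shows "prob val' s \<le> prob val s"
proof (rule ccontr)
  let ?D = "\<lambda>t. prob val' t - prob val t"
  define M where "M = Max (?D ` S)"
  define T where "T = {t \<in> S. ?D t = M}"
  assume greater: "\<not> ?thesis"
  have "finite S"
    using tpmc unfolding tpmc_def by simp
  then have le_M: "\<forall>t\<in>S. ?D t \<le> M"
    unfolding M_def by simp
  have "M \<in> ?D ` S"
    unfolding M_def using \<open>finite S\<close> \<open>s \<in> S\<close> by (intro Max_in) auto
  then obtain t where "t \<in> T"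
    unfolding T_def by auto
  have "0 < M"
    using le_M \<open>s \<in> S\<close> greater by force
  note T_closed = prob_diff_max_set_closed[OF val val' agree le_M \<open>0 < M\<close>, folded T_def]
  have "x \<in> T"
  proof (rule ccontr)
    assume "x \<notin> T"
    then have "E `` T \<subseteq> T"
      using T_closed(3) by blast
    then have "E\<^sup>* `` T = T"
      by (rule Image_closed_trancl)
    moreover have "(t, fin) \<in> E\<^sup>*"
      using reach \<open>t \<in> T\<close> T_closed(2) unfolding T_def by auto
    ultimately show False
      using \<open>t \<in> T\<close> T_closed(1) by blast
  qed
  then have "y \<in> T"
    using \<open>x \<approx> y\<close> val val' \<open>y \<in> S\<close> unfolding T_def equiv_states_def by auto
  have "(E - UNIV \<times> {x}) `` (T - {x}) \<subseteq> T - {x}"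
    using T_closed(3) by blast
  then have "(E - UNIV \<times> {x})\<^sup>* `` (T - {x}) = T - {x}"
    by (rule Image_closed_trancl)
  with path \<open>y \<in> T\<close> \<open>y \<noteq> x\<close> T_closed(1) show False
    by blast
qed

lemma perturbation_prob_eq:
  assumes reach: "\<forall>s\<in>S - {fail}. (s, fin) \<in> E\<^sup>*"
    and val: "valuation val" and val': "valuation val'" and agree: "\<forall>s. s \<noteq> x \<longrightarrow> val' s = val s"
    and "y \<in> S" and "y \<noteq> x" and "x \<approx> y" and "(y, fin) \<in> (E - UNIV \<times> {x})\<^sup>*"
    and "s \<in> S"
  shows "prob val' s = prob val s"
proof -
  have "\<forall>s. s \<noteq> x \<longrightarrow> val s = val' s"
    using agree by simp
  with assms show ?thesis
    using perturbation_prob_le[OF reach val' val] perturbation_prob_le[OF reach val val']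
    by (meson order_antisym)
qed

lemma valuation_reweight:
  assumes "valuation val" and "succs E x = {a, b}" and "a \<noteq> b" and "0 < q" and "q < 1"
  shows "valuation (val(x := (\<lambda>t. if t = a then q else 1 - q)))"
  using assms unfolding graph_preserving_def by auto

lemma equivalent_to_successor:
  assumes reach: "\<forall>s\<in>S - {fail}. (s, fin) \<in> E\<^sup>*"
    and "card (succs E x) = 2" and "y \<in> S" and "y \<noteq> x" and "x \<approx> y"
    and path: "(y, fin) \<in> (E - UNIV \<times> {x})\<^sup>*" and "a \<in> succs E x"
  shows "x \<approx> a"
  unfolding equiv_states_def
proof (intro allI impI)
  fix val
  assume val: "valuation val"
  obtain b where succs_x: "succs E x = {a, b}" and "a \<noteq> b"
    using \<open>card (succs E x) = 2\<close> \<open>a \<in> succs E x\<close> by (metis card_2_iff doubleton_eq_iff insertE singletonD)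
  then have x: "x \<in> S - {fin, fail}"
    using nontarget_if_succs_nonempty by blast
  define p where "p = val x a"
  have "0 < p" and "0 < val x b"
    unfolding p_def using valuation_pos[OF val] succs_x by auto
  have val_xb: "val x b = 1 - p"
    using valuation_sum[OF val x] succs_x \<open>a \<noteq> b\<close> unfolding p_def by simp
  define q where "q = p / 2"
  define val' where "val' = val(x := (\<lambda>t. if t = a then q else 1 - q))"
  have agree: "\<forall>s. s \<noteq> x \<longrightarrow> val' s = val s"
    unfolding val'_def by simp
  have val': "valuation val'"
    unfolding val'_def
    using valuation_reweight[OF val succs_x \<open>a \<noteq> b\<close>] \<open>0 < p\<close> \<open>0 < val x b\<close> val_xb q_def by simp
  have unchanged: "prob val' t = prob val t" if "t \<in> S" for t
    using perturbation_prob_eq[OF reach val val' agree assms(3-6) that] .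
  have harmonic: "prob val x = p * prob val a + (1 - p) * prob val b"
    using prob_harmonic[OF val] x succs_x \<open>a \<noteq> b\<close> val_xb unfolding p_def by simp
  have harmonic': "prob val x = q * prob val a + (1 - q) * prob val b"
  proof -
    have "prob val' x = q * prob val' a + (1 - q) * prob val' b"
      using prob_harmonic[OF val'] x succs_x \<open>a \<noteq> b\<close> unfolding val'_def by simp
    moreover have "a \<in> S" and "b \<in> S"
      using succs_subset succs_x by auto
    ultimately show ?thesis
      using unchanged x by simp
  qed
  have "(p - q) * (prob val a - prob val b) =
      (p * prob val a + (1 - p) * prob val b) - (q * prob val a + (1 - q) * prob val b)"
    by (simp add: algebra_simps)
  also have "\<dots> = 0"
    using harmonic harmonic' by simp
  finally have "prob val a = prob val b"
    using \<open>0 < p\<close> unfolding q_def by simp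
  with harmonic show "prob val x = prob val a"
    by (simp add: algebra_simps)
qed

lemma exit_not_avoidable:
  assumes reach: "\<forall>s\<in>S - {fail}. (s, fin) \<in> E\<^sup>*"
    and two_succs: "\<forall>s\<in>S - {fin, fail}. card (succs E s) = 2"
    and exit: "is_exit E (equiv_class S E fin fail s) x"
    and "y \<in> equiv_class S E fin fail s" and "y \<noteq> x"
  shows "(y, fin) \<notin> (E - UNIV \<times> {x})\<^sup>*"
proof
  assume path: "(y, fin) \<in> (E - UNIV \<times> {x})\<^sup>*"
  let ?C = "equiv_class S E fin fail s"
  obtain a where "a \<in> succs E x" and "a \<notin> ?C"
    using exit unfolding is_exit_def by blast
  then have "card (succs E x) = 2"
    using two_succs nontarget_if_succs_nonempty by blast
  have "s \<approx> x" and "s \<approx> y" and "y \<in> S"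
    using exit \<open>y \<in> ?C\<close> unfolding is_exit_def equiv_class_def by auto
  then have "x \<approx> y"
    unfolding equiv_states_def by simp
  have "x \<approx> a"
    using equivalent_to_successor[OF reach] \<open>card (succs E x) = 2\<close> \<open>y \<in> S\<close> \<open>y \<noteq> x\<close> \<open>x \<approx> y\<close>
      path \<open>a \<in> succs E x\<close> by blast
  with \<open>s \<approx> x\<close> have "a \<in> ?C"
    using succs_subset \<open>a \<in> succs E x\<close> unfolding equiv_class_def equiv_states_def by auto
  with \<open>a \<notin> ?C\<close> show False ..
qed

lemma class_exit_unique:
  assumes reach: "\<forall>s\<in>S - {fail}. (s, fin) \<in> E\<^sup>*"
    and two_succs: "\<forall>s\<in>S - {fin, fail}. card (succs E s) = 2"
    and "is_exit E (equiv_class S E fin fail s) x" and "is_exit E (equiv_class S E fin fail s) y"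
  shows "x = y"
proof (rule ccontr)
  assume "x \<noteq> y"
  let ?Ex = "E - UNIV \<times> {x}"
  have "x \<in> S - {fail}"
    using assms(3) nontarget_if_succs_nonempty unfolding is_exit_def equiv_class_def by auto
  with reach have "(x, fin) \<in> ?Ex\<^sup>*"
    using rtrancl_last_visit[of x fin E x] by blast
  then have "(x, fin) \<in> (?Ex - UNIV \<times> {y})\<^sup>* \<or> (y, fin) \<in> (?Ex - UNIV \<times> {y})\<^sup>*"
    by (rule rtrancl_last_visit)
  then have "(x, fin) \<in> (E - UNIV \<times> {y})\<^sup>* \<or> (y, fin) \<in> ?Ex\<^sup>*"
    by (meson Diff_subset Diff_mono order_refl rtrancl_mono subsetD)
  then show False
    using exit_not_avoidable[OF reach two_succs] assms(3,4) \<open>x \<noteq> y\<close>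
    unfolding is_exit_def by blast
qed

end

theorem theorem7:
  fixes S :: "'a set" and E :: "('a \<times> 'a) set" and fin fail :: 'a and s0 :: 'a
  assumes mc: "tpmc S E fin fail"
    and fin_class: "equiv_class S E fin fail fin = {fin}"
    and fail_class: "equiv_class S E fin fail fail = {fail}"
    and no_self_loop: "\<forall>s. (s, s) \<notin> E"
    and two_succs: "\<forall>s \<in> S - {fin, fail}. card (succs E s) = 2"
    and s0: "s0 \<in> S"
    and not_fin: "fin \<notin> equiv_class S E fin fail s0"
    and not_fail: "fail \<notin> equiv_class S E fin fail s0"
  shows "\<exists>!x. is_exit E (equiv_class S E fin fail s0) x"
proof -
  interpret tpmc_chain S E fin fail
    using mc by unfold_locales
  have "\<forall>s\<in>S - {fail}. (s, fin) \<in> E\<^sup>*"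
    using reaches_fin[OF fail_class] by blast
  then show ?thesis
    using class_has_exit[OF s0 not_fin not_fail] class_exit_unique[OF _ two_succs] by blast
qed

end
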